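(* Let $m,n\geq 1$ be integers. Then, as an identity of rational functions in $x$, \[ \sum_{k=1}^{n}\binom{n}{k}\frac{(m-x)_k(x)_{n-k}}{(x-m)_{m+n}k^m} =-\sum_{1\leq k_m\leq k_{m-1}\leq\cdots\leq k_1\leq n}\frac{1}{k_1k_2\cdots k_m (x+k_1-1)(x+k_2-2)\cdots(x+k_m-m)}. \]
   Context: $(x)_N=x(x+1)\cdots(x+N-1)$ denotes the rising factorial, with $(x)_0=1$. *)

theory Defs
  imports Complex_Main
begin

text \<open>Weakly decreasing chains n >= k_1 >= k_2 >= ... >= k_m >= 1, encoded as
  functions nat => nat supported on {1..m} (value 0 outside), so the set is finite.\<close>
definition dec_chains :: "nat \<Rightarrow> nat \<Rightarrow> (nat \<Rightarrow> nat) set" where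
  "dec_chains m n = {k. (\<forall>i\<in>{1..m}. 1 \<le> k i \<and> k i \<le> n)
                       \<and> (\<forall>i. i \<notin> {1..m} \<longrightarrow> k i = 0)
                       \<and> (\<forall>i. 1 \<le> i \<and> i < m \<longrightarrow> k (Suc i) \<le> k i)}"

end

theory Submission
  imports Defs
begin

text \<open>Write \<open>L(m,n,x)\<close> for the left-hand side and \<open>R(m,n,x)\<close> for the chain sum. Both satisfy
  \<open>F(m+1,n+1,x) = F(m+1,n,x) + F(m,n+1,x-1) / ((n+1)(x+n))\<close>: for \<open>R\<close> by splitting the chains
  according to whether \<open>k\<^sub>1 = n+1\<close>, for \<open>L\<close> termwise by Pascal's rule and absorption.
  Since \<open>L(m+1,0) = R(m+1,0) = 0\<close> and \<open>L(0,n) = -1 = -R(0,n)\<close> for \<open>n \<ge> 1\<close> (Chu--Vandermonde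
  for \<open>(-x + x)\<^sub>n = 0\<close>), induction on \<open>m\<close> and then \<open>n\<close> gives \<open>L = -R\<close>.\<close>

lemma binomial_pochhammer_diff:
  fixes x :: "'a::comm_ring_1"
  assumes "1 \<le> k" "k \<le> Suc n"
  shows "of_nat (Suc n choose k) * pochhammer x (Suc n - k)
         - of_nat (n choose k) * pochhammer x (n - k) * (x + of_nat n)
         = of_nat (n choose (k - 1)) * pochhammer (x - 1) (Suc n - k)"
proof (cases "k = Suc n")
  case True
  then show ?thesis unfolding True binomial_eq_0[OF lessI] by simp
next
  case False
  obtain k' where k: "k = Suc k'"
    using assms(1) by (cases k) auto
  define j where "j = n - k"
  have n: "n = Suc k' + j"
    using assms(2) False unfolding j_def k by simp
  define a where "a = (of_nat (n choose k) :: 'a)"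
  define b where "b = (of_nat (n choose k') :: 'a)"
  define P where "P = pochhammer x j"
  have absorb: "of_nat k * a = (of_nat j + 1) * b"
  proof -
    have "k * (n choose k) = Suc j * (n choose k')"
      using Suc_times_binomial_add[of k' j] unfolding n k by simp
    then show ?thesis unfolding a_def b_def by (metis of_nat_Suc of_nat_mult add.commute)
  qed
  have "(a + b) * (P * (x + of_nat j)) - a * P * (x + of_nat n)
        = P * (b * x + b * of_nat j - of_nat k * a)"
    unfolding n k by (simp add: algebra_simps)
  also have "\<dots> = b * ((x - 1) * P)"
    unfolding absorb by (simp add: algebra_simps)
  finally have "(a + b) * (P * (x + of_nat j)) - a * P * (x + of_nat n) = b * ((x - 1) * P)" .
  moreover have "Suc n choose k = (n choose k) + (n choose k')" "Suc n - k = Suc j" "n - k = j"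
    using n unfolding k by simp_all
  moreover have "pochhammer x (Suc j) = P * (x + of_nat j)"
    unfolding P_def by (rule pochhammer_Suc)
  moreover have "pochhammer (x - 1) (Suc j) = (x - 1) * P"
    unfolding P_def by (simp add: pochhammer_rec)
  ultimately show ?thesis
    unfolding a_def b_def k diff_Suc_1 by (simp only: of_nat_add P_def[symmetric])
qed

definition binomial_pochhammer_term :: "nat \<Rightarrow> nat \<Rightarrow> 'a::field \<Rightarrow> nat \<Rightarrow> 'a" where
  "binomial_pochhammer_term m n x k =
     of_nat (n choose k) * pochhammer (of_nat m - x) k * pochhammer x (n - k)
     / (pochhammer (x - of_nat m) (m + n) * of_nat k ^ m)"

lemma binomial_pochhammer_term_Suc_Suc:
  fixes x :: "'a::field_char_0"
  assumes k: "1 \<le> k" "k \<le> Suc n"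
    and nonzero: "pochhammer (x - of_nat (Suc m)) (Suc m + Suc n) \<noteq> 0"
  shows "binomial_pochhammer_term (Suc m) (Suc n) x k - binomial_pochhammer_term (Suc m) n x k
       = binomial_pochhammer_term m (Suc n) (x - 1) k / (of_nat (Suc n) * (x + of_nat n))"
proof -
  define D where "D = pochhammer (x - of_nat (Suc m)) (Suc m + n)"
  define E where "E = x + of_nat n"
  define K where "K = (of_nat k :: 'a)"
  define N where "N = (of_nat (Suc n) :: 'a)"
  define A where "A = pochhammer (of_nat (Suc m) - x) k"
  define B where "B = of_nat (Suc n choose k) * pochhammer x (Suc n - k)"
  define B' where "B' = of_nat (n choose k) * pochhammer x (n - k)"
  define C where "C = of_nat (n choose (k - 1)) * pochhammer (x - 1) (Suc n - k)"
  define C' where "C' = of_nat (Suc n choose k) * pochhammer (x - 1) (Suc n - k)"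
  have D_Suc: "pochhammer (x - of_nat (Suc m)) (Suc m + Suc n) = D * E"
    unfolding D_def E_def by (simp add: pochhammer_Suc)
  have D_shift: "pochhammer (x - 1 - of_nat m) (m + Suc n) = D"
    unfolding D_def by (simp add: algebra_simps)
  have A_shift: "pochhammer (of_nat m - (x - 1)) k = A"
    unfolding A_def by (simp add: algebra_simps)
  have nz: "D \<noteq> 0" "E \<noteq> 0" "K \<noteq> 0" "N \<noteq> 0"
    using nonzero k unfolding D_Suc K_def N_def by (auto simp del: of_nat_Suc)
  have diff: "B - B' * E = C"
    unfolding B_def B'_def C_def E_def by (rule binomial_pochhammer_diff[OF k])
  have absorb: "K * C' = N * C"
  proof -
    have "k * (Suc n choose k) = Suc n * (n choose (k - 1))"
      using times_binomial_minus1_eq[of k "Suc n"] k by simp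
    then show ?thesis unfolding K_def N_def C_def C'_def by (metis of_nat_mult mult.assoc)
  qed
  have "binomial_pochhammer_term (Suc m) (Suc n) x k - binomial_pochhammer_term (Suc m) n x k
      = A * B / (D * E * K ^ Suc m) - A * B' / (D * K ^ Suc m)"
    unfolding binomial_pochhammer_term_def D_Suc D_def[symmetric] A_def[symmetric] K_def[symmetric]
      B_def B'_def by (simp only: mult_ac)
  also have "\<dots> = A * C / (D * E * K ^ Suc m)"
    using nz unfolding diff[symmetric] by (simp add: field_simps)
  also have "\<dots> = A * C' / (D * K ^ m) / (N * E)"
    using nz absorb by (simp add: field_simps)
  also have "\<dots> = binomial_pochhammer_term m (Suc n) (x - 1) k / (N * E)"
    unfolding binomial_pochhammer_term_def D_shift A_shift K_def[symmetric] C'_def by (simp only: mult_ac)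
  finally show ?thesis unfolding E_def N_def .
qed

definition binomial_pochhammer_sum :: "nat \<Rightarrow> nat \<Rightarrow> 'a::field \<Rightarrow> 'a" where
  "binomial_pochhammer_sum m n x = (\<Sum>k=1..n. binomial_pochhammer_term m n x k)"

lemma binomial_pochhammer_sum_Suc_Suc:
  fixes x :: "'a::field_char_0"
  assumes "pochhammer (x - of_nat (Suc m)) (Suc m + Suc n) \<noteq> 0"
  shows "binomial_pochhammer_sum (Suc m) (Suc n) x
       = binomial_pochhammer_sum (Suc m) n x
         + binomial_pochhammer_sum m (Suc n) (x - 1) / (of_nat (Suc n) * (x + of_nat n))"
proof -
  have "binomial_pochhammer_sum (Suc m) (Suc n) x
      = (\<Sum>k=1..Suc n. binomial_pochhammer_term (Suc m) n x k
           + binomial_pochhammer_term m (Suc n) (x - 1) k / (of_nat (Suc n) * (x + of_nat n)))"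
    unfolding binomial_pochhammer_sum_def
    using binomial_pochhammer_term_Suc_Suc[OF _ _ assms] by (intro sum.cong) (auto simp: algebra_simps)
  also have "\<dots> = (\<Sum>k=1..Suc n. binomial_pochhammer_term (Suc m) n x k)
      + (\<Sum>k=1..Suc n. binomial_pochhammer_term m (Suc n) (x - 1) k) / (of_nat (Suc n) * (x + of_nat n))"
    by (simp only: sum.distrib sum_divide_distrib)
  also have "(\<Sum>k=1..Suc n. binomial_pochhammer_term (Suc m) n x k) = binomial_pochhammer_sum (Suc m) n x"
    \<comment> \<open>the extra term \<open>k = n + 1\<close> vanishes because \<open>n choose (n + 1) = 0\<close>\<close>
    unfolding binomial_pochhammer_sum_def by (simp add: binomial_pochhammer_term_def)
  finally show ?thesis
    unfolding binomial_pochhammer_sum_def by simp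
qed

lemma binomial_pochhammer_sum_0_left:
  fixes x :: "'a::field"
  assumes "n \<ge> 1" "pochhammer x n \<noteq> 0"
  shows "binomial_pochhammer_sum 0 n x = -1"
proof -
  have "(\<Sum>k\<le>n. of_nat (n choose k) * pochhammer (-x) k * pochhammer x (n - k)) = 0"
    using pochhammer_binomial_sum[of "-x" x n] assms(1) by (simp add: pochhammer_0_left)
  then have "pochhammer x n + (\<Sum>k=1..n. of_nat (n choose k) * pochhammer (-x) k * pochhammer x (n - k)) = 0"
    by (simp add: atMost_atLeast0 sum.atLeast_Suc_atMost)
  then have "(\<Sum>k=1..n. of_nat (n choose k) * pochhammer (-x) k * pochhammer x (n - k)) = - pochhammer x n"
    by (simp add: add_eq_0_iff)
  then show ?thesis
    using assms(2) unfolding binomial_pochhammer_sum_def binomial_pochhammer_term_def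
    by (simp add: sum_divide_distrib[symmetric])
qed

lemma dec_chainsI:
  assumes "\<And>i. 1 \<le> i \<Longrightarrow> i \<le> m \<Longrightarrow> 1 \<le> k i \<and> k i \<le> n"
    and "\<And>i. \<not> (1 \<le> i \<and> i \<le> m) \<Longrightarrow> k i = 0"
    and "\<And>i. 1 \<le> i \<Longrightarrow> i < m \<Longrightarrow> k (Suc i) \<le> k i"
  shows "k \<in> dec_chains m n"
  using assms unfolding dec_chains_def by auto

lemma dec_chainsD:
  assumes "k \<in> dec_chains m n"
  shows "\<And>i. 1 \<le> i \<Longrightarrow> i \<le> m \<Longrightarrow> 1 \<le> k i \<and> k i \<le> n"
    and "\<And>i. \<not> (1 \<le> i \<and> i \<le> m) \<Longrightarrow> k i = 0"
    and "\<And>i. 1 \<le> i \<Longrightarrow> i < m \<Longrightarrow> k (Suc i) \<le> k i"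
  using assms unfolding dec_chains_def by auto

lemma finite_dec_chains: "finite (dec_chains m n)"
proof (rule finite_subset)
  show "dec_chains m n \<subseteq> {k. \<forall>i. (i \<in> {1..m} \<longrightarrow> k i \<in> {1..n}) \<and> (i \<notin> {1..m} \<longrightarrow> k i = 0)}"
    unfolding dec_chains_def by auto
  show "finite {k. \<forall>i. (i \<in> {1..m} \<longrightarrow> k i \<in> {1..n}) \<and> (i \<notin> {1..m} \<longrightarrow> k i = 0)}"
    by (rule finite_set_of_finite_funs) simp_all
qed

lemma dec_chains_0_left: "dec_chains 0 n = {\<lambda>_. 0}"
  unfolding dec_chains_def by auto

lemma dec_chains_Suc_0: "dec_chains (Suc m) 0 = {}"
  unfolding dec_chains_def by force

lemma dec_chains_mono: "n \<le> n' \<Longrightarrow> dec_chains m n \<subseteq> dec_chains m n'"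
  unfolding dec_chains_def by auto

lemma dec_chains_le_head:
  assumes "k \<in> dec_chains m n" "1 \<le> i" "i \<le> m"
  shows "k i \<le> k 1"
  using assms(2,3)
proof (induction i rule: dec_induct)
  case (step j)
  then have "k (Suc j) \<le> k j" using dec_chainsD(3)[OF assms(1)] by simp
  with step show ?case by simp
qed simp

definition cons_chain :: "nat \<Rightarrow> (nat \<Rightarrow> nat) \<Rightarrow> nat \<Rightarrow> nat" where
  "cons_chain j c = (\<lambda>i. if i = 0 then 0 else if i = 1 then j else c (i - 1))"

lemma cons_chain_Suc: "cons_chain j c (Suc i) = (if i = 0 then j else c i)"
  by (simp add: cons_chain_def)

lemma cons_chain_in_dec_chains:
  assumes c: "c \<in> dec_chains m n" and j: "1 \<le> j" "n \<le> j"
  shows "cons_chain j c \<in> dec_chains (Suc m) j"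
proof (rule dec_chainsI)
  fix i assume "1 \<le> i" "i \<le> Suc m"
  then obtain i' where "i = Suc i'" "i' \<le> m" by (cases i) auto
  then show "1 \<le> cons_chain j c i \<and> cons_chain j c i \<le> j"
    using dec_chainsD(1)[OF c, of i'] j by (auto simp: cons_chain_Suc)
next
  fix i assume "\<not> (1 \<le> i \<and> i \<le> Suc m)"
  then show "cons_chain j c i = 0"
    by (auto simp: cons_chain_def intro!: dec_chainsD(2)[OF c])
next
  fix i assume "1 \<le> i" "i < Suc m"
  then obtain i' where "i = Suc i'" "i' < m" by (cases i) auto
  then show "cons_chain j c (Suc i) \<le> cons_chain j c i"
    using dec_chainsD(1)[OF c, of 1] dec_chainsD(3)[OF c, of i'] j by (auto simp: cons_chain_Suc)
qed

lemma dec_chains_Suc_Suc: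
  "dec_chains (Suc m) (Suc n) = dec_chains (Suc m) n \<union> cons_chain (Suc n) ` dec_chains m (Suc n)"
proof
  show "dec_chains (Suc m) n \<union> cons_chain (Suc n) ` dec_chains m (Suc n) \<subseteq> dec_chains (Suc m) (Suc n)"
    using dec_chains_mono[of n "Suc n" "Suc m"] cons_chain_in_dec_chains[of _ m "Suc n" "Suc n"] by auto
  show "dec_chains (Suc m) (Suc n) \<subseteq> dec_chains (Suc m) n \<union> cons_chain (Suc n) ` dec_chains m (Suc n)"
  proof
    fix k assume k: "k \<in> dec_chains (Suc m) (Suc n)"
    show "k \<in> dec_chains (Suc m) n \<union> cons_chain (Suc n) ` dec_chains m (Suc n)"
    proof (cases "k 1 \<le> n")
      case True
      then have "k i \<le> n" if "1 \<le> i" "i \<le> Suc m" for i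
        using dec_chains_le_head[OF k that] by linarith
      then have "k \<in> dec_chains (Suc m) n"
        using dec_chainsD[OF k] by (intro dec_chainsI) auto
      then show ?thesis by blast
    next
      case False
      define c where "c = (\<lambda>i. if i = 0 then 0 else k (Suc i))"
      have "c \<in> dec_chains m (Suc n)"
        using dec_chainsD[OF k] by (intro dec_chainsI) (auto simp: c_def)
      moreover have "cons_chain (Suc n) c = k"
      proof
        fix i
        show "cons_chain (Suc n) c i = k i"
          using False dec_chainsD(1)[OF k, of 1] dec_chainsD(2)[OF k, of 0]
          by (cases i) (auto simp: cons_chain_Suc c_def cons_chain_def)
      qed
      ultimately show ?thesis by blast
    qed
  qed
qed

definition chain_sum :: "nat \<Rightarrow> nat \<Rightarrow> 'a::field \<Rightarrow> 'a" where
  "chain_sum m n x = (\<Sum>k\<in>dec_chains m n. 1 / (\<Prod>i=1..m. of_nat (k i) * (x + of_nat (k i) - of_nat i)))"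

lemma chain_sum_0_left: "chain_sum 0 n x = 1"
  unfolding chain_sum_def dec_chains_0_left by simp

lemma chain_sum_Suc_0: "chain_sum (Suc m) 0 x = 0"
  unfolding chain_sum_def dec_chains_Suc_0 by simp

lemma inj_on_cons_chain: "inj_on (cons_chain j) (dec_chains m n)"
proof (rule inj_onI)
  fix a b assume a: "a \<in> dec_chains m n" and b: "b \<in> dec_chains m n"
    and eq: "cons_chain j a = cons_chain j b"
  show "a = b"
  proof
    fix i
    show "a i = b i"
    proof (cases "i = 0")
      case True
      then show ?thesis using dec_chainsD(2)[OF a] dec_chainsD(2)[OF b] by simp
    next
      case False
      then show ?thesis using fun_cong[OF eq, of "Suc i"] by (simp add: cons_chain_Suc)
    qed
  qed
qed

lemma prod_cons_chain:
  fixes x :: "'a::field"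
  shows "(\<Prod>i=1..Suc m. of_nat (cons_chain j c i) * (x + of_nat (cons_chain j c i) - of_nat i))
       = of_nat j * (x + of_nat j - 1) * (\<Prod>i=1..m. of_nat (c i) * (x - 1 + of_nat (c i) - of_nat i))"
proof -
  have "(\<Prod>i=1..Suc m. of_nat (cons_chain j c i) * (x + of_nat (cons_chain j c i) - of_nat i))
      = (\<Prod>i=0..m. of_nat (cons_chain j c (Suc i)) * (x + of_nat (cons_chain j c (Suc i)) - of_nat (Suc i)))"
    using prod.shift_bounds_cl_Suc_ivl[of "\<lambda>i. of_nat (cons_chain j c i) * (x + of_nat (cons_chain j c i) - of_nat i)" 0 m]
    by simp
  also have "\<dots> = of_nat j * (x + of_nat j - 1) * (\<Prod>i=1..m. of_nat (c i) * (x - 1 + of_nat (c i) - of_nat i))"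
    by (simp add: prod.atLeast_Suc_atMost cons_chain_Suc algebra_simps)
  finally show ?thesis .
qed

lemma chain_sum_Suc_Suc:
  fixes x :: "'a::field"
  shows "chain_sum (Suc m) (Suc n) x
       = chain_sum (Suc m) n x + chain_sum m (Suc n) (x - 1) / (of_nat (Suc n) * (x + of_nat n))"
proof -
  let ?f = "\<lambda>k. 1 / (\<Prod>i=1..Suc m. of_nat (k i) * (x + of_nat (k i) - of_nat i))"
  have "cons_chain (Suc n) c \<notin> dec_chains (Suc m) n" for c
    using dec_chainsD(1)[of "cons_chain (Suc n) c" "Suc m" n 1] by (auto simp: cons_chain_def)
  then have disjoint: "dec_chains (Suc m) n \<inter> cons_chain (Suc n) ` dec_chains m (Suc n) = {}"
    by blast
  have "chain_sum (Suc m) (Suc n) x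
      = sum ?f (dec_chains (Suc m) n) + sum (?f \<circ> cons_chain (Suc n)) (dec_chains m (Suc n))"
    unfolding chain_sum_def dec_chains_Suc_Suc
    by (simp add: sum.union_disjoint finite_dec_chains disjoint sum.reindex inj_on_cons_chain)
  also have "sum (?f \<circ> cons_chain (Suc n)) (dec_chains m (Suc n))
      = chain_sum m (Suc n) (x - 1) / (of_nat (Suc n) * (x + of_nat n))"
    unfolding chain_sum_def sum_divide_distrib comp_def prod_cons_chain
    by (simp add: algebra_simps)
  finally show ?thesis
    unfolding chain_sum_def .
qed

lemma binomial_pochhammer_sum_eq_neg_chain_sum:
  fixes x :: "'a::field_char_0"
  assumes "pochhammer (x - of_nat m) (m + n) \<noteq> 0" "0 < m + n"
  shows "binomial_pochhammer_sum m n x = - chain_sum m n x"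
  using assms
proof (induction m arbitrary: n x)
  case 0
  then show ?case by (simp add: binomial_pochhammer_sum_0_left chain_sum_0_left)
next
  case (Suc m)
  note outer_IH = Suc.IH
  from Suc.prems(1) show ?case
  proof (induction n)
    case 0
    then show ?case by (simp add: binomial_pochhammer_sum_def chain_sum_Suc_0)
  next
    case (Suc n)
    have "pochhammer (x - of_nat (Suc m)) (Suc m + Suc n)
        = pochhammer (x - 1 - of_nat m) (m + Suc n) * (x + of_nat n)"
      by (simp add: pochhammer_Suc algebra_simps)
    then have nonzero: "pochhammer (x - 1 - of_nat m) (m + Suc n) \<noteq> 0"
      using Suc.prems by simp
    then have "pochhammer (x - of_nat (Suc m)) (Suc m + n) \<noteq> 0"
      by (simp add: algebra_simps)
    then have "binomial_pochhammer_sum (Suc m) n x = - chain_sum (Suc m) n x"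
      by (rule Suc.IH)
    moreover have "binomial_pochhammer_sum m (Suc n) (x - 1) = - chain_sum m (Suc n) (x - 1)"
      using outer_IH[OF nonzero] by simp
    ultimately show ?case
      unfolding binomial_pochhammer_sum_Suc_Suc[OF Suc.prems] chain_sum_Suc_Suc by (simp add: field_simps)
  qed
qed

theorem corollary5p1:
  fixes m n :: nat and x :: complex
  assumes "m \<ge> 1" and "n \<ge> 1"
    and "pochhammer (x - of_nat m) (m + n) \<noteq> 0"
  shows "(\<Sum>k=1..n. of_nat (n choose k) * pochhammer (of_nat m - x) k * pochhammer x (n - k)
            / (pochhammer (x - of_nat m) (m + n) * of_nat k ^ m))
       = - (\<Sum>k\<in>dec_chains m n.
              1 / (\<Prod>i=1..m. of_nat (k i) * (x + of_nat (k i) - of_nat i)))"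
  (* The identity holds for m = 0 as well. *)
  using binomial_pochhammer_sum_eq_neg_chain_sum[OF assms(3)] assms(2)
  unfolding binomial_pochhammer_sum_def binomial_pochhammer_term_def chain_sum_def by simp

end
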